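(* Let $x, y, p \in \mathbb{Z}$ with $p \geq 3$ a prime such that $x^2 - 2 = y^p$. Then there exist $a, b, r \in \mathbb{Z}$ with $|r| \leq \frac{p-1}{2}$ such that $$x + \sqrt{2} = (1+\sqrt{2})^r (a + b\sqrt{2})^p.$$ Hence the integers $a, b$ satisfy $$\frac{1}{2\sqrt{2}}\left((1+\sqrt{2})^r (a+b\sqrt{2})^p - (1-\sqrt{2})^r (a - b\sqrt{2})^p\right) = 1.$$ *)

theory Defs
  imports Complex_Main "HOL-Computational_Algebra.Primes"
begin

end

theory Submission
  imports Defs
begin

(* Z[sqrt 2] is Euclidean for the absolute value of the norm (round the exact quotient
   componentwise), hence factorial.  In a solution x is odd, so a common divisor of x + sqrt 2
   and x - sqrt 2 has odd norm dividing -8, the norm of their difference 2 sqrt 2: the two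
   factors of y^p are coprime, and x + sqrt 2 is a unit times a p-th power.  The units are
   +-(1 + sqrt 2)^k with k an integer; as p is odd, the sign and the exponent up to a residue r
   with |r| <= (p - 1)/2 are absorbed into the p-th power.  Conjugation gives the matching
   factorisation of x - sqrt 2, and subtracting the two yields the second identity. *)

lemma int_square_eq_double_square_imp_zero:
  fixes a b :: int
  assumes "a ^ 2 = 2 * b ^ 2"
  shows "b = 0"
proof (rule ccontr)
  assume "b \<noteq> 0"
  then have "a \<noteq> 0" using assms by auto
  have "multiplicity 2 (a ^ 2) = multiplicity 2 (2 * b ^ 2)" using assms by simp
  then have "2 * multiplicity 2 a = 1 + 2 * multiplicity 2 b"
    using \<open>a \<noteq> 0\<close> \<open>b \<noteq> 0\<close>
    by (simp add: prime_elem_multiplicity_mult_distrib prime_elem_multiplicity_power_distrib)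
  then show False by presburger
qed

lemma odd_if_square_minus_two_eq_power:
  fixes x y :: int
  assumes "x ^ 2 - 2 = y ^ n" and "n \<ge> 2"
  shows "odd x"
proof
  assume "even x"
  then have "even (y ^ n)" by (simp flip: assms(1))
  then have "even y" by simp
  have "(2 :: int) ^ 2 dvd y ^ n"
    using dvd_power_same[OF \<open>even y\<close>] le_imp_power_dvd[OF assms(2)] by (rule dvd_trans)
  moreover have "(2 :: int) ^ 2 dvd x ^ 2"
    using \<open>even x\<close> by (rule dvd_power_same)
  ultimately have "(2 :: int) ^ 2 dvd x ^ 2 - y ^ n" by (rule dvd_diff[rotated])
  then show False by (simp add: assms(1) [symmetric])
qed

(* the integer nearest to u / n, namely floor (u / n + 1 / 2) *)
definition round_div :: "int \<Rightarrow> int \<Rightarrow> int" where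
  "round_div u n = (2 * u + n) div (2 * n)"

lemma round_div_mult [simp]:
  assumes "n \<noteq> 0"
  shows "round_div (k * n) n = k"
proof -
  have "n div (2 * n) = 0"
    using assms by (cases "n > 0") (simp_all add: div_pos_pos_trivial div_neg_neg_trivial)
  then show ?thesis
    using assms by (simp add: round_div_def algebra_simps)
qed

lemma round_div_error:
  assumes "n \<noteq> 0"
  shows "\<bar>2 * (u - round_div u n * n)\<bar> \<le> \<bar>n\<bar>"
proof -
  define r where "r = (2 * u + n) mod (2 * n)"
  have "2 * (u - round_div u n * n) = r - n"
    unfolding r_def round_div_def by (simp add: algebra_simps minus_div_mult_eq_mod [symmetric])
  moreover have "if n > 0 then 0 \<le> r \<and> r < 2 * n else 2 * n < r \<and> r \<le> 0"
    using assms by (simp add: r_def)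
  ultimately show ?thesis by (auto simp: abs_le_iff split: if_splits)
qed

lemma prime_power_dvd_coprime_factor:
  fixes p :: "'a :: algebraic_semidom"
  assumes "prime_elem p" and "coprime a b" and "p dvd a" and "p ^ n dvd a * b"
  shows "p ^ n dvd a"
proof (cases "n = 0")
  case False
  have "\<not> p dvd b"
    using assms(1-3) coprime_common_divisor prime_elem_not_unit by blast
  with False show ?thesis
    using prime_power_dvd_multD[OF assms(1), of n b a] assms(4) by (simp add: mult.commute)
qed simp

lemma coprime_mult_eq_power_imp_unit_mult_power:
  fixes a b c :: "'a :: factorial_semiring"
  assumes "coprime a b" and "a * b = c ^ n" and "n > 0"
  shows "\<exists>u d. is_unit u \<and> a = u * d ^ n"
  using assms
proof (induction c arbitrary: a b rule: prime_divisors_induct)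
  case zero
  then have "a = 0 \<or> b = 0" by (simp add: zero_power)
  then show ?case
  proof
    assume "a = 0"
    then show ?case using \<open>n > 0\<close> by (intro exI[of _ 1] exI[of _ 0]) simp
  next
    assume "b = 0"
    then have "is_unit a" using zero.prems(1) by simp
    then show ?case by (intro exI[of _ a] exI[of _ 1]) simp
  qed
next
  case (unit c)
  then have "is_unit a" by (metis is_unit_power_iff is_unit_mult_iff)
  then show ?case by (intro exI[of _ a] exI[of _ 1]) simp
next
  case (factor p c)
  then have "prime_elem p" by simp
  have pn: "p ^ n dvd a * b"
    unfolding factor.prems(2) power_mult_distrib by simp
  then have "p dvd a \<or> p dvd b"
    using dvd_trans[OF dvd_power[of n p]] \<open>n > 0\<close> prime_elem_dvd_mult_iff[OF \<open>prime_elem p\<close>]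
    by blast
  then show ?case
  proof
    assume "p dvd a"
    then have "p ^ n dvd a"
      using prime_power_dvd_coprime_factor[OF \<open>prime_elem p\<close> factor.prems(1)] pn by blast
    then obtain a' where a': "a = p ^ n * a'" by (rule dvdE)
    have "p ^ n * (a' * b) = p ^ n * c ^ n"
      using factor.prems(2) by (simp add: a' power_mult_distrib mult.assoc)
    then have "a' * b = c ^ n" using \<open>prime_elem p\<close> by simp
    moreover have "coprime a' b"
      using a' by (intro coprime_divisors[OF _ dvd_refl factor.prems(1)]) simp
    ultimately obtain u d where "is_unit u" "a' = u * d ^ n"
      using factor.IH[of a' b] \<open>n > 0\<close> by blast
    moreover from this have "a = u * (p * d) ^ n"
      by (simp add: a' power_mult_distrib mult.left_commute)
    ultimately show ?thesis by blast
  next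
    assume "p dvd b"
    then have "p ^ n dvd b"
      using prime_power_dvd_coprime_factor[OF \<open>prime_elem p\<close>, of b a n] factor.prems(1) pn
      by (simp add: mult.commute coprime_commute)
    then obtain b' where b': "b = p ^ n * b'" by (rule dvdE)
    have "p ^ n * (a * b') = p ^ n * c ^ n"
      using factor.prems(2) by (simp add: b' power_mult_distrib mult.left_commute)
    then have "a * b' = c ^ n" using \<open>prime_elem p\<close> by simp
    moreover have "coprime a b'"
      using b' by (intro coprime_divisors[OF dvd_refl _ factor.prems(1)]) simp
    ultimately show ?thesis using factor.IH[of a b'] \<open>n > 0\<close> by blast
  qed
qed

lemma power_eq_reduced_power_mult_power:
  fixes e e' :: "'a :: comm_ring_1"
  assumes "e * e' = 1" and "odd p"
  obtains j c where "2 * j < p" "e ^ k = e ^ j * c ^ p \<or> e ^ k = e' ^ j * c ^ p"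
proof -
  define m j where "m = k div p" and "j = k mod p"
  have k: "k = p * m + j" by (simp add: m_def j_def)
  have "j < p" using \<open>odd p\<close> by (simp add: m_def j_def odd_pos)
  show ?thesis
  proof (cases "2 * j < p")
    case True
    have "e ^ k = e ^ j * (e ^ m) ^ p"
      by (simp add: k power_add mult.commute flip: power_mult)
    then show ?thesis using True that by blast
  next
    case False
    have "e ^ k = (e' ^ (p - j) * e ^ (p - j)) * e ^ k"
      using assms(1) by (simp flip: power_mult_distrib add: mult.commute)
    also have "\<dots> = e' ^ (p - j) * e ^ (p - j + k)"
      by (simp add: mult.assoc power_add)
    also have "p - j + k = Suc m * p"
      using k \<open>j < p\<close> by simp
    also have "e ^ (Suc m * p) = (e ^ Suc m) ^ p"
      by (rule power_mult)
    finally have "e ^ k = e' ^ (p - j) * (e ^ Suc m) ^ p" .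
    moreover have "2 * (p - j) < p"
      using False \<open>j < p\<close> \<open>odd p\<close> by presburger
    ultimately show ?thesis using that by blast
  qed
qed

(* Zs a b stands for a + b sqrt 2 *)
datatype zsqrt2 = Zs (re: int) (im: int)

instantiation zsqrt2 :: comm_ring_1
begin

definition "0 = Zs 0 0"
definition "1 = Zs 1 0"
definition "a + b = Zs (re a + re b) (im a + im b)"
definition "- a = Zs (- re a) (- im a)"
definition "a - b = Zs (re a - re b) (im a - im b)"
definition "a * b = Zs (re a * re b + 2 * im a * im b) (re a * im b + im a * re b)"

instance
  by standard (auto simp: zero_zsqrt2_def one_zsqrt2_def plus_zsqrt2_def uminus_zsqrt2_def
      minus_zsqrt2_def times_zsqrt2_def zsqrt2.expand algebra_simps)

end

lemma zsqrt2_re_im_simps [simp]: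
  "re 0 = 0" "im 0 = 0" "re 1 = 1" "im 1 = 0"
  "re (a + b) = re a + re b" "im (a + b) = im a + im b"
  "re (- a) = - re a" "im (- a) = - im a"
  "re (a - b) = re a - re b" "im (a - b) = im a - im b"
  "re (a * b) = re a * re b + 2 * im a * im b" "im (a * b) = re a * im b + im a * re b"
  by (simp_all add: zero_zsqrt2_def one_zsqrt2_def plus_zsqrt2_def uminus_zsqrt2_def
      minus_zsqrt2_def times_zsqrt2_def)

lemma zsqrt2_eq_iff: "a = b \<longleftrightarrow> re a = re b \<and> im a = im b"
  by (cases a; cases b) auto

lemma re_of_nat [simp]: "re (of_nat n) = int n" and im_of_nat [simp]: "im (of_nat n) = 0"
  by (induction n) simp_all

lemma re_of_int [simp]: "re (of_int k) = k" and im_of_int [simp]: "im (of_int k) = 0"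
  by (cases k rule: int_cases; simp)+

lemma re_numeral [simp]: "re (numeral n) = numeral n" and im_numeral [simp]: "im (numeral n) = 0"
  by (metis of_int_numeral re_of_int, metis of_int_numeral im_of_int)

definition zconj :: "zsqrt2 \<Rightarrow> zsqrt2" where
  "zconj z = Zs (re z) (- im z)"

definition znorm :: "zsqrt2 \<Rightarrow> int" where
  "znorm z = re z ^ 2 - 2 * im z ^ 2"

lemma zconj_simps [simp]: "re (zconj z) = re z" "im (zconj z) = - im z"
  by (simp_all add: zconj_def)

lemma zconj_Zs: "zconj (Zs a b) = Zs a (- b)"
  by (simp add: zconj_def)

lemma zconj_mult: "zconj (a * b) = zconj a * zconj b"
  by (simp add: zsqrt2_eq_iff)

lemma zconj_power: "zconj (a ^ n) = zconj a ^ n"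
  by (induction n) (simp_all add: zconj_mult zsqrt2_eq_iff)

lemma mult_zconj: "z * zconj z = of_int (znorm z)"
  by (simp add: zsqrt2_eq_iff znorm_def power2_eq_square)

lemma znorm_mult: "znorm (a * b) = znorm a * znorm b"
  by (simp add: znorm_def algebra_simps power2_eq_square)

lemma znorm_zconj [simp]: "znorm (zconj z) = znorm z"
  by (simp add: znorm_def)

lemma znorm_1 [simp]: "znorm 1 = 1"
  by (simp add: znorm_def)

lemma znorm_dvd: "a dvd b \<Longrightarrow> znorm a dvd znorm b"
  by (auto simp: znorm_mult)

lemma znorm_eq_0_iff [simp]: "znorm z = 0 \<longleftrightarrow> z = 0"
proof
  assume "znorm z = 0"
  then have "re z ^ 2 = 2 * im z ^ 2" by (simp add: znorm_def)
  moreover from this have "im z = 0" by (rule int_square_eq_double_square_imp_zero)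
  ultimately show "z = 0" by (simp add: zsqrt2_eq_iff)
qed (simp add: znorm_def)

instance zsqrt2 :: idom
proof
  fix a b :: zsqrt2
  assume "a \<noteq> 0" "b \<noteq> 0"
  then show "a * b \<noteq> 0"
    by (metis znorm_eq_0_iff znorm_mult mult_eq_0_iff)
qed

instantiation zsqrt2 :: euclidean_ring
begin

(* the exact quotient a * zconj b / znorm b, rounded componentwise *)
definition divide_zsqrt2 :: "zsqrt2 \<Rightarrow> zsqrt2 \<Rightarrow> zsqrt2" where
  "a div b = Zs (round_div (re (a * zconj b)) (znorm b)) (round_div (im (a * zconj b)) (znorm b))"

definition modulo_zsqrt2 :: "zsqrt2 \<Rightarrow> zsqrt2 \<Rightarrow> zsqrt2" where
  "modulo_zsqrt2 a b = a - a div b * b"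

definition euclidean_size_zsqrt2 :: "zsqrt2 \<Rightarrow> nat" where
  "euclidean_size z = nat \<bar>znorm z\<bar>"

lemma znorm_mod_less:
  assumes "b \<noteq> 0"
  shows "\<bar>znorm (a mod b)\<bar> < \<bar>znorm b\<bar>"
proof -
  define n where "n = znorm b"
  define E where "E = re (a * zconj b) - round_div (re (a * zconj b)) n * n"
  define F where "F = im (a * zconj b) - round_div (im (a * zconj b)) n * n"
  have "n \<noteq> 0" using assms by (simp add: n_def)
  have bound: "4 * (u - round_div u n * n) ^ 2 \<le> n ^ 2" for u
  proof -
    have "(2 * (u - round_div u n * n)) ^ 2 \<le> n ^ 2"
      using round_div_error[OF \<open>n \<noteq> 0\<close>] abs_le_square_iff by blast
    then show ?thesis by (simp only: power_mult_distrib) simp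
  qed
  have "a mod b * zconj b = a * zconj b - a div b * of_int n"
    by (simp add: modulo_zsqrt2_def algebra_simps mult_zconj n_def)
  then have "a mod b * zconj b = Zs E F"
    by (simp add: zsqrt2_eq_iff divide_zsqrt2_def E_def F_def n_def)
  then have "znorm (a mod b) * n = E ^ 2 - 2 * F ^ 2"
    by (metis n_def znorm_mult znorm_def zsqrt2.sel znorm_zconj)
  moreover have "4 * E ^ 2 \<le> n ^ 2" unfolding E_def by (rule bound)
  moreover have "4 * F ^ 2 \<le> n ^ 2" unfolding F_def by (rule bound)
  moreover have "n ^ 2 > 0" "E ^ 2 \<ge> 0" "F ^ 2 \<ge> 0"
    using \<open>n \<noteq> 0\<close> by simp_all
  ultimately have "\<bar>znorm (a mod b) * n\<bar> < n ^ 2"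
    unfolding abs_less_iff by linarith
  then have "\<bar>znorm (a mod b)\<bar> * \<bar>n\<bar> < \<bar>n\<bar> * \<bar>n\<bar>"
    by (simp add: abs_mult power2_eq_square)
  then show ?thesis
    using \<open>n \<noteq> 0\<close> n_def by (meson mult_less_cancel_right_pos zero_less_abs_iff)
qed

instance
proof
  show "a div b * b + a mod b = a" for a b :: zsqrt2
    by (simp add: modulo_zsqrt2_def)
  show "a div 0 = 0" for a :: zsqrt2
    by (simp add: divide_zsqrt2_def round_div_def zsqrt2_eq_iff)
  show "euclidean_size (0 :: zsqrt2) = 0"
    by (simp add: euclidean_size_zsqrt2_def)
  show "a * b div b = a" if "b \<noteq> 0" for a b :: zsqrt2
    using that by (simp add: divide_zsqrt2_def zsqrt2_eq_iff mult.assoc mult_zconj)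
  show "euclidean_size (a mod b) < euclidean_size b" if "b \<noteq> 0" for a b :: zsqrt2
    using znorm_mod_less[OF that] that by (simp add: euclidean_size_zsqrt2_def)
  show "euclidean_size a \<le> euclidean_size (a * b)" if "b \<noteq> 0" for a b :: zsqrt2
    using that by (simp add: euclidean_size_zsqrt2_def znorm_mult abs_mult nat_mult_distrib
        Suc_le_eq)
qed

end

lemma is_unit_iff_znorm: "is_unit z \<longleftrightarrow> is_unit (znorm z)"
proof
  assume "is_unit (znorm z)"
  then obtain k where "1 = znorm z * k" by (rule dvdE)
  then have "z * (zconj z * of_int k) = 1"
    by (metis mult.assoc mult_zconj of_int_1 of_int_mult)
  then show "is_unit z" by (metis dvd_triv_left)
qed (metis znorm_1 znorm_dvd)

instantiation zsqrt2 :: normalization_euclidean_semiring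
begin

(* Associated elements give the same predicate, so the choice picks the same representative. *)
definition normalize_zsqrt2 :: "zsqrt2 \<Rightarrow> zsqrt2" where
  "normalize_zsqrt2 z = (if is_unit z then 1 else SOME w. w dvd z \<and> z dvd w)"

definition unit_factor_zsqrt2 :: "zsqrt2 \<Rightarrow> zsqrt2" where
  "unit_factor_zsqrt2 z = z div normalize z"

lemma normalize_zsqrt2_dvd: "normalize z dvd (z :: zsqrt2)"
  and dvd_normalize_zsqrt2: "z dvd normalize (z :: zsqrt2)"
  using someI[of "\<lambda>w. w dvd z \<and> z dvd w" z] by (auto simp: normalize_zsqrt2_def)

lemma normalize_zsqrt2_cong:
  fixes a b :: zsqrt2
  assumes "a dvd b" "b dvd a"
  shows "normalize a = normalize b"
proof -
  have "is_unit a \<longleftrightarrow> is_unit b"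
    using assms by (meson dvd_trans)
  moreover have "(\<lambda>w. w dvd a \<and> a dvd w) = (\<lambda>w. w dvd b \<and> b dvd w)"
    using assms by (meson dvd_trans)
  ultimately show ?thesis unfolding normalize_zsqrt2_def by simp
qed

instance
proof
  show "unit_factor (0 :: zsqrt2) = 0"
    by (simp add: unit_factor_zsqrt2_def)
  show "normalize (0 :: zsqrt2) = 0"
    by (metis dvd_0_left_iff dvd_normalize_zsqrt2)
  show "unit_factor a = a" if "is_unit a" for a :: zsqrt2
    using that by (simp add: unit_factor_zsqrt2_def normalize_zsqrt2_def)
  show "unit_factor a * normalize a = a" for a :: zsqrt2
    by (simp add: unit_factor_zsqrt2_def normalize_zsqrt2_dvd)
  show "is_unit (unit_factor a)" if "a \<noteq> 0" for a :: zsqrt2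
  proof -
    obtain k where k: "a = normalize a * k" using normalize_zsqrt2_dvd by (rule dvdE)
    obtain l where l: "normalize a = a * l" using dvd_normalize_zsqrt2 by (rule dvdE)
    have "a * 1 = a * (l * k)" using k l by (simp add: mult.assoc)
    then have "is_unit k" using that by (metis dvd_triv_right mult_left_cancel)
    moreover have "unit_factor a = k"
      using k that by (simp add: unit_factor_zsqrt2_def) (metis mult_not_zero nonzero_mult_div_cancel_left)
    ultimately show ?thesis by simp
  qed
  show "unit_factor (a * b) = a * unit_factor b" if "is_unit a" for a b :: zsqrt2
  proof -
    have "normalize (a * b) = normalize b"
      using that by (intro normalize_zsqrt2_cong) (simp_all add: dvd_mult_unit_iff')
    then show ?thesis
      by (simp add: unit_factor_zsqrt2_def div_mult_swap normalize_zsqrt2_dvd)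
  qed
qed

end

definition eps :: zsqrt2 where "eps = Zs 1 1"
definition eps_inv :: zsqrt2 where "eps_inv = Zs (-1) 1"

lemma eps_mult_eps_inv: "eps * eps_inv = 1"
  by (simp add: eps_def eps_inv_def zsqrt2_eq_iff)

lemma zconj_eps: "zconj eps = - eps_inv"
  by (simp add: eps_def eps_inv_def zsqrt2_eq_iff)

lemma pell_solution_eq_eps_power:
  assumes "a > 0" "b \<ge> 0" "\<bar>a ^ 2 - 2 * b ^ 2\<bar> = 1"
  shows "\<exists>k. Zs a b = eps ^ k"
  using assms
proof (induction "nat b" arbitrary: a b rule: less_induct)
  case less
  show ?case
  proof (cases "b = 0")
    case True
    then have "a = 1" using less.prems by (simp add: power2_eq_1_iff)
    then show ?thesis using True by (intro exI[of _ 0]) (simp add: zsqrt2_eq_iff)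
  next
    case False
    then have "b \<ge> 1" using less.prems by simp
    then have "b ^ 2 \<ge> 1" by (simp add: one_le_power)
    then have sq: "a ^ 2 < (2 * b) ^ 2" "b ^ 2 \<le> a ^ 2"
      using less.prems(3) by (auto simp: power_mult_distrib abs_eq_iff)
    have "a < 2 * b"
      using sq(1) by (rule power_less_imp_less_base) (use less.prems(2) in simp)
    moreover have "b \<le> a"
      using sq(2) by (rule power2_le_imp_le) (use less.prems(1) in simp)
    moreover have "\<bar>(2 * b - a) ^ 2 - 2 * (a - b) ^ 2\<bar> = 1"
    proof -
      have "(2 * b - a) ^ 2 - 2 * (a - b) ^ 2 = - (a ^ 2 - 2 * b ^ 2)"
        by (simp add: power2_eq_square algebra_simps)
      then show ?thesis using less.prems(3) by simp
    qed
    ultimately obtain k where "Zs (2 * b - a) (a - b) = eps ^ k"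
      using less.hyps[of "a - b" "2 * b - a"] \<open>b \<ge> 1\<close> by auto
    moreover have "Zs a b = Zs (2 * b - a) (a - b) * eps"
      by (simp add: eps_def zsqrt2_eq_iff)
    ultimately show ?thesis by (metis power_Suc2)
  qed
qed

lemma is_unit_zsqrt2_imp_sign_eps_power:
  assumes "is_unit z"
  obtains s k where "s\<^sup>2 = 1" "z = s * eps ^ k \<or> z = s * eps_inv ^ k"
proof -
  define a b where "a = re z" "b = im z"
  have pell: "\<bar>\<bar>a\<bar> ^ 2 - 2 * \<bar>b\<bar> ^ 2\<bar> = 1"
    using assms by (simp add: is_unit_iff_znorm znorm_def a_b_def)
  have "a \<noteq> 0"
  proof
    assume "a = 0"
    then have "2 * b\<^sup>2 = 1" using pell by simp
    then have "even (1 :: int)" by (metis dvd_triv_left)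
    then show False by simp
  qed
  then obtain k where k: "Zs \<bar>a\<bar> \<bar>b\<bar> = eps ^ k"
    using pell_solution_eq_eps_power[OF _ _ pell] by auto
  define s where "s = (if a > 0 then 1 else - 1 :: zsqrt2)"
  have s2: "s\<^sup>2 = 1" by (simp add: s_def)
  show ?thesis
  proof (cases "b \<ge> 0 \<longleftrightarrow> a > 0")
    case True
    then have "z = s * eps ^ k"
      by (auto simp: s_def a_b_def zsqrt2_eq_iff simp flip: k)
    with s2 show ?thesis by (intro that[of s k]) simp_all
  next
    case False
    then have "z = s * zconj (eps ^ k)"
      by (auto simp: s_def a_b_def zsqrt2_eq_iff simp flip: k)
    also have "\<dots> = s * (- eps_inv) ^ k"
      by (simp add: zconj_power zconj_eps)
    also have "\<dots> = (s * (- 1) ^ k) * eps_inv ^ k"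
      by (simp only: power_minus[of eps_inv] mult.assoc)
    finally have "z = (s * (- 1) ^ k) * eps_inv ^ k" .
    moreover have "(s * (- 1) ^ k)\<^sup>2 = 1"
      using s2 by (simp add: power_mult_distrib) (simp add: power2_eq_square)
    ultimately show ?thesis by (intro that[of "s * (- 1) ^ k" k]) simp_all
  qed
qed

lemma is_unit_zsqrt2_eq_eps_power_mult_power:
  assumes "is_unit u" and "odd p"
  obtains j c where "2 * j < p" "u = eps ^ j * c ^ p \<or> u = eps_inv ^ j * c ^ p"
proof -
  obtain s k where s: "s\<^sup>2 = 1" and u: "u = s * eps ^ k \<or> u = s * eps_inv ^ k"
    using is_unit_zsqrt2_imp_sign_eps_power[OF assms(1)] .
  have "s ^ p = s"
  proof -
    from \<open>odd p\<close> obtain m where "p = 2 * m + 1" by (rule oddE)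
    then have "s ^ p = (s\<^sup>2) ^ m * s" by (simp add: power_add power_mult)
    with s show ?thesis by simp
  qed
  then have absorb: "s * (e * c ^ p) = e * (s * c) ^ p" for e c :: zsqrt2
    by (simp add: power_mult_distrib mult.left_commute)
  have "eps_inv * eps = 1" using eps_mult_eps_inv by (simp add: mult.commute)
  from u show ?thesis
  proof
    assume u: "u = s * eps ^ k"
    obtain j c where j: "2 * j < p"
      and "eps ^ k = eps ^ j * c ^ p \<or> eps ^ k = eps_inv ^ j * c ^ p"
      using power_eq_reduced_power_mult_power[OF eps_mult_eps_inv \<open>odd p\<close>] .
    then have "u = eps ^ j * (s * c) ^ p \<or> u = eps_inv ^ j * (s * c) ^ p"
      using u absorb by metis
    with j show ?thesis by (rule that)
  next
    assume u: "u = s * eps_inv ^ k"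
    obtain j c where j: "2 * j < p"
      and "eps_inv ^ k = eps_inv ^ j * c ^ p \<or> eps_inv ^ k = eps ^ j * c ^ p"
      using power_eq_reduced_power_mult_power[OF \<open>eps_inv * eps = 1\<close> \<open>odd p\<close>] .
    then have "u = eps ^ j * (s * c) ^ p \<or> u = eps_inv ^ j * (s * c) ^ p"
      using u absorb by metis
    with j show ?thesis by (rule that)
  qed
qed

lemma coprime_Zs_zconj:
  assumes "odd x"
  shows "coprime (Zs x 1) (zconj (Zs x 1))"
proof (rule coprimeI)
  fix c
  assume c: "c dvd Zs x 1" "c dvd zconj (Zs x 1)"
  then have "c dvd Zs x 1 - zconj (Zs x 1)" by (rule dvd_diff)
  then have "znorm c dvd - (2 ^ 3)"
    using znorm_dvd by (fastforce simp: zconj_def znorm_def)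
  then have dvd8: "znorm c dvd 2 ^ 3" by (simp only: dvd_minus_iff)
  have "znorm c dvd x ^ 2 - 2"
    using znorm_dvd[OF c(1)] by (simp add: znorm_def)
  then have "odd (znorm c)"
    using assms dvd_trans[of 2 "znorm c" "x ^ 2 - 2"] by auto
  then have "coprime (znorm c) (2 ^ 3)"
    by (simp only: coprime_power_right_iff coprime_right_2_iff_odd) simp
  then show "is_unit c"
    using coprime_absorb_left[OF dvd8] by (simp add: is_unit_iff_znorm)
qed

lemma Zs_eq_eps_power_mult_power:
  fixes x y :: int
  assumes "x ^ 2 - 2 = y ^ n" and "odd n" and "n > 1"
  obtains j E \<gamma> where "2 * j < n" "E = eps ^ j \<or> E = eps_inv ^ j" "Zs x 1 = E * \<gamma> ^ n"
proof -
  have "odd x" using odd_if_square_minus_two_eq_power assms(1,3) by simp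
  have norm: "Zs x 1 * zconj (Zs x 1) = of_int y ^ n"
    using assms(1) by (simp add: mult_zconj znorm_def flip: of_int_power)
  obtain u \<delta> where "is_unit u" and u\<delta>: "Zs x 1 = u * \<delta> ^ n"
    using coprime_mult_eq_power_imp_unit_mult_power[OF coprime_Zs_zconj[OF \<open>odd x\<close>] norm]
      assms(3) by auto
  obtain j c where j: "2 * j < n" and "u = eps ^ j * c ^ n \<or> u = eps_inv ^ j * c ^ n"
    using is_unit_zsqrt2_eq_eps_power_mult_power[OF \<open>is_unit u\<close> \<open>odd n\<close>] .
  then have "Zs x 1 = eps ^ j * (c * \<delta>) ^ n \<or> Zs x 1 = eps_inv ^ j * (c * \<delta>) ^ n"
    using u\<delta> by (auto simp: power_mult_distrib mult.assoc)
  then show ?thesis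
    using that[OF j] by blast
qed

definition to_real :: "zsqrt2 \<Rightarrow> real" where
  "to_real z = of_int (re z) + of_int (im z) * sqrt 2"

lemma to_real_Zs [simp]: "to_real (Zs a b) = of_int a + of_int b * sqrt 2"
  by (simp add: to_real_def)

lemma to_real_1 [simp]: "to_real 1 = 1"
  by (simp add: to_real_def)

lemma to_real_mult [simp]: "to_real (a * b) = to_real a * to_real b"
  by (simp add: to_real_def algebra_simps)

lemma to_real_power [simp]: "to_real (a ^ n) = to_real a ^ n"
  by (induction n) simp_all

lemma to_real_eps_power_eq_powi:
  assumes "E = eps ^ j \<or> E = eps_inv ^ j"
  obtains r :: int where "\<bar>r\<bar> = int j"
    "to_real E = (1 + sqrt 2) powi r" "to_real (zconj E) = (1 - sqrt 2) powi r"
proof -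
  have "inverse (1 + sqrt 2) = sqrt 2 - (1 :: real)" "inverse (1 - sqrt 2) = - 1 - sqrt (2 :: real)"
    by (rule inverse_unique; simp add: algebra_simps)+
  then have eps: "to_real eps = 1 + sqrt 2" "to_real (zconj eps) = 1 - sqrt 2"
    and eps_inv: "to_real eps_inv = inverse (1 + sqrt 2)"
      "to_real (zconj eps_inv) = inverse (1 - sqrt 2)"
    by (simp_all add: to_real_def eps_def eps_inv_def)
  from assms show ?thesis
  proof
    assume "E = eps ^ j"
    then show ?thesis
      using that[of "int j"] eps by (simp add: zconj_power)
  next
    assume "E = eps_inv ^ j"
    then show ?thesis
      using that[of "- int j"] eps_inv by (simp add: zconj_power power_int_minus power_inverse)
  qed
qed

theorem theorem3p1:
  fixes x y p :: int
  assumes "prime p" and "p \<ge> 3" and "x ^ 2 - 2 = y ^ nat p"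
  shows "\<exists>a b r :: int.
           real_of_int \<bar>r\<bar> \<le> (real_of_int p - 1) / 2 \<and>
           real_of_int x + sqrt 2 = (1 + sqrt 2) powi r * (real_of_int a + real_of_int b * sqrt 2) ^ nat p \<and>
           1 / (2 * sqrt 2) * ((1 + sqrt 2) powi r * (real_of_int a + real_of_int b * sqrt 2) ^ nat p
              - (1 - sqrt 2) powi r * (real_of_int a - real_of_int b * sqrt 2) ^ nat p) = 1"
proof -
  define n where "n = nat p"
  have "odd n" "n > 1"
    using assms(1,2) prime_odd_int[of p] by (simp_all add: n_def even_nat_iff)
  then obtain j E \<gamma> where "2 * j < n" and E: "E = eps ^ j \<or> E = eps_inv ^ j"
    and factor: "Zs x 1 = E * \<gamma> ^ n"
    using Zs_eq_eps_power_mult_power assms(3) n_def by blast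
  obtain r where "\<bar>r\<bar> = int j"
    and E_plus: "to_real E = (1 + sqrt 2) powi r" and E_minus: "to_real (zconj E) = (1 - sqrt 2) powi r"
    using to_real_eps_power_eq_powi[OF E] .
  obtain a b where \<gamma>: "\<gamma> = Zs a b" by (cases \<gamma>)
  have "real_of_int x + sqrt 2 = (1 + sqrt 2) powi r * (real_of_int a + real_of_int b * sqrt 2) ^ n"
    using arg_cong[OF factor, of to_real] E_plus by (simp add: \<gamma>)
  moreover have "real_of_int x - sqrt 2 = (1 - sqrt 2) powi r * (real_of_int a - real_of_int b * sqrt 2) ^ n"
    using arg_cong[OF factor, of "to_real \<circ> zconj"] E_minus by (simp add: \<gamma> zconj_Zs zconj_mult zconj_power)
  moreover have "real_of_int \<bar>r\<bar> \<le> (real_of_int p - 1) / 2"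
    using \<open>2 * j < n\<close> \<open>\<bar>r\<bar> = int j\<close> assms(2) by (simp add: n_def)
  ultimately show ?thesis
    unfolding n_def by (intro exI[of _ a] exI[of _ b] exI[of _ r]) (auto simp flip: of_int_diff)
qed

end
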